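(* Let $\lambda\in(0,\tfrac12)$ and let $G$ be a finite simple connected graph with $n$ vertices. Then $$mt^{e}_{\lambda}(G)\le (n-1)\lambda,$$ and equality holds when $G$ is the complete graph $K_n$ (at any of its vertices).
   Context: $d(u,v)$ denotes graph distance. For a vertex $u$ of $G=(V,E)$, $t^{e}_{\lambda}(u)=\sum_{v\in V\setminus\{u\}} d(u,v)\lambda^{d(u,v)}$, and $mt^{e}_{\lambda}(G)=\min\{t^{e}_{\lambda}(u):u\in V\}$. *)

theory Defs
  imports Complex_Main
begin

definition simple_graph :: "'a set \<Rightarrow> ('a \<Rightarrow> 'a \<Rightarrow> bool) \<Rightarrow> bool" where
  "simple_graph V E \<longleftrightarrow> finite V \<and> (\<forall>x y. E x y \<longrightarrow> E y x) \<and> (\<forall>x. \<not> E x x)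
     \<and> (\<forall>x y. E x y \<longrightarrow> x \<in> V \<and> y \<in> V)"

definition adj :: "'a set \<Rightarrow> ('a \<Rightarrow> 'a \<Rightarrow> bool) \<Rightarrow> 'a \<Rightarrow> 'a \<Rightarrow> bool" where
  "adj V E x y \<longleftrightarrow> x \<in> V \<and> y \<in> V \<and> E x y"

text \<open>There is a walk of length k from u to v iff (adj V E ^^ k) u v.\<close>
definition connected_graph :: "'a set \<Rightarrow> ('a \<Rightarrow> 'a \<Rightarrow> bool) \<Rightarrow> bool" where
  "connected_graph V E \<longleftrightarrow> V \<noteq> {} \<and> (\<forall>u\<in>V. \<forall>v\<in>V. \<exists>k. (adj V E ^^ k) u v)"

definition gdist :: "'a set \<Rightarrow> ('a \<Rightarrow> 'a \<Rightarrow> bool) \<Rightarrow> 'a \<Rightarrow> 'a \<Rightarrow> nat" where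
  "gdist V E u v = (LEAST k. (adj V E ^^ k) u v)"

definition complete_graph :: "'a set \<Rightarrow> ('a \<Rightarrow> 'a \<Rightarrow> bool) \<Rightarrow> bool" where
  "complete_graph V E \<longleftrightarrow> (\<forall>x\<in>V. \<forall>y\<in>V. x \<noteq> y \<longrightarrow> E x y)"

definition te :: "real \<Rightarrow> 'a set \<Rightarrow> ('a \<Rightarrow> 'a \<Rightarrow> bool) \<Rightarrow> 'a \<Rightarrow> real" where
  "te lam V E u = (\<Sum>v\<in>V - {u}. real (gdist V E u v) * lam ^ gdist V E u v)"

definition mte :: "real \<Rightarrow> 'a set \<Rightarrow> ('a \<Rightarrow> 'a \<Rightarrow> bool) \<Rightarrow> real" where
  "mte lam V E = Min ((\<lambda>u. te lam V E u) ` V)"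

end

theory Submission
  imports Defs
begin

text \<open>For \<open>0 \<le> \<lambda> \<le> 1/2\<close> every summand \<open>d \<lambda>\<^sup>d\<close> of \<open>t\<^sup>e\<^sub>\<lambda>(u)\<close> is at most \<open>\<lambda>\<close>,
  with equality at \<open>d = 1\<close>; summing over the \<open>n - 1\<close> other vertices bounds \<open>t\<^sup>e\<^sub>\<lambda>(u)\<close>
  at every vertex, hence also the minimum. In \<open>K\<^sub>n\<close> all distances are \<open>1\<close>, so the bound is
  attained everywhere.\<close>

lemma of_nat_mult_power_le_self:
  fixes lam :: real
  assumes "0 \<le> lam" "lam \<le> 1/2"
  shows "real d * lam ^ d \<le> lam"
proof (induction d)
  case 0
  then show ?case using assms by simp
next
  case (Suc d)
  show ?case
  proof (cases "d = 0")
    case True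
    then show ?thesis by simp
  next
    case False
    \<comment> \<open>the ratio of consecutive terms, \<open>(d + 1) \<lambda> / d\<close>, is at most \<open>1\<close> once \<open>d \<ge> 1\<close>\<close>
    have "real (Suc d) * lam \<le> real (Suc d) / 2" using assms by simp
    also have "\<dots> \<le> real d" using False by simp
    finally have "real (Suc d) * lam * lam ^ d \<le> real d * lam ^ d"
      using assms by (intro mult_right_mono) auto
    then have "real (Suc d) * lam ^ Suc d \<le> real d * lam ^ d"
      by (simp add: algebra_simps)
    with Suc.IH show ?thesis by linarith
  qed
qed

lemma te_le:
  assumes "0 \<le> lam" "lam \<le> 1/2" "finite V" "u \<in> V"
  shows "te lam V E u \<le> real (card V - 1) * lam"
proof -
  have "te lam V E u \<le> (\<Sum>v\<in>V - {u}. lam)"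
    unfolding te_def by (rule sum_mono) (rule of_nat_mult_power_le_self[OF assms(1,2)])
  also have "\<dots> = real (card V - 1) * lam" using assms by simp
  finally show ?thesis .
qed

lemma mte_le_te:
  assumes "finite V" "u \<in> V"
  shows "mte lam V E \<le> te lam V E u"
  unfolding mte_def using assms by (intro Min_le) auto

lemma gdist_complete_graph:
  assumes "complete_graph V E" "u \<in> V" "v \<in> V" "u \<noteq> v"
  shows "gdist V E u v = 1"
  unfolding gdist_def
proof (rule Least_equality)
  show "(adj V E ^^ 1) u v" using assms by (auto simp: adj_def complete_graph_def)
next
  fix k assume "(adj V E ^^ k) u v"
  with \<open>u \<noteq> v\<close> show "1 \<le> k" by (cases k) auto
qed

lemma te_complete_graph:
  assumes "complete_graph V E" "finite V" "u \<in> V"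
  shows "te lam V E u = real (card V - 1) * lam"
proof -
  have "te lam V E u = (\<Sum>v\<in>V - {u}. lam)"
    unfolding te_def by (rule sum.cong) (use gdist_complete_graph[OF assms(1,3)] in auto)
  then show ?thesis using assms(2,3) by simp
qed

lemma mte_complete_graph:
  assumes "complete_graph V E" "finite V" "V \<noteq> {}"
  shows "mte lam V E = real (card V - 1) * lam"
proof -
  have "(\<lambda>u. te lam V E u) ` V = {real (card V - 1) * lam}"
    using te_complete_graph[OF assms(1,2)] assms(3) by auto
  then show ?thesis unfolding mte_def by simp
qed

theorem theorem4:
  fixes V :: "'a set" and E :: "'a \<Rightarrow> 'a \<Rightarrow> bool" and lam :: real and n :: nat
  assumes "0 < lam" and "lam < 1/2"
    and "simple_graph V E" and "connected_graph V E" and "card V = n"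
  shows "mte lam V E \<le> real (n - 1) * lam
    \<and> (complete_graph V E \<longrightarrow>
         mte lam V E = real (n - 1) * lam \<and> (\<forall>u\<in>V. te lam V E u = real (n - 1) * lam))"
proof -
  have fin: "finite V" using assms(3) by (simp add: simple_graph_def)
  have ne: "V \<noteq> {}" using assms(4) by (simp add: connected_graph_def)
  then obtain u where u: "u \<in> V" by blast
  have "te lam V E u \<le> real (n - 1) * lam"
    using te_le[OF _ _ fin u, of lam E] assms(1,2,5) by simp
  then have "mte lam V E \<le> real (n - 1) * lam"
    using mte_le_te[OF fin u, of lam E] by linarith
  moreover have "mte lam V E = real (n - 1) * lam \<and> (\<forall>u\<in>V. te lam V E u = real (n - 1) * lam)"
    if "complete_graph V E"
    using mte_complete_graph[OF that fin ne] te_complete_graph[OF that fin] assms(5) by simp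
  ultimately show ?thesis by blast
qed

end
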